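(* Let $k\ge1$ and let $T_1,\dots,T_k$ be independent exponential random variables with parameters $\lambda_i=4\sqrt{i+1}$. Then for any $t>0$, $$\mathbf P\big(\|I^0_t\|_2>k\big)\le 4^k\,\mathbf P\Big(\sum_{i=1}^kT_i<t\Big).$$
   Context: $\mathbb{H}=\{(x_1,x_2)\in\mathbb{Z}^2:x_2\ge0\}$. To each directed nearest-neighbour edge $x\to y$ in $\mathbb{H}$ attach an independent Poisson process $N^{x\to y}$ of intensity $\max(\sqrt{x_2},1)$. $I^0_t$ is the set of $y\in\mathbb{H}$ such that there are a nearest-neighbour path $0=y_0,y_1,\dots,y_m=y$ in $\mathbb{H}$ and times $0<s_1<\dots<s_m\le t$ with $N^{y_{i-1}\to y_i}$ having an arrival at time $s_i$ for each $i$ (the interface process started from the origin). For finite $A\subset\mathbb{H}$, $\|A\|_2=\max_{x\in A}\|x\|_2$ (Euclidean norm). *)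

theory Defs
  imports "HOL-Probability.Probability"
begin

type_synonym site = "int \<times> int"

definition inH :: "site \<Rightarrow> bool" where
  "inH x \<longleftrightarrow> snd x \<ge> 0"

definition nn :: "site \<Rightarrow> site \<Rightarrow> bool" where
  "nn x y \<longleftrightarrow> \<bar>fst x - fst y\<bar> + \<bar>snd x - snd y\<bar> = 1"

definition Hedge :: "site \<times> site \<Rightarrow> bool" where
  "Hedge e \<longleftrightarrow> inH (fst e) \<and> inH (snd e) \<and> nn (fst e) (snd e)"

definition rate :: "site \<times> site \<Rightarrow> real" where
  "rate e = max (sqrt (real_of_int (snd (fst e)))) 1"

definition cnt :: "real set \<Rightarrow> real \<Rightarrow> real \<Rightarrow> nat" where
  "cnt S a b = card (S \<inter> {a<..b})"

text \<open>N e \<omega> is the (random) set of arrival times of the process attached to edge e.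
  The family (N e) over the directed edges of H is a family of independent Poisson
  processes on (0,\<infinity>) with intensities rate e: arrival sets are locally finite subsets
  of (0,\<infinity>), and for every finite family of edge/interval pairs, with intervals
  attached to the same edge pairwise disjoint, the counts are independent and
  Poisson distributed with mean rate e * (b - a).\<close>
definition indep_poisson_family ::
  "'a measure \<Rightarrow> (site \<times> site \<Rightarrow> 'a \<Rightarrow> real set) \<Rightarrow> bool" where
  "indep_poisson_family M N \<longleftrightarrow>
     (\<forall>e \<omega>. Hedge e \<longrightarrow> \<omega> \<in> space M \<longrightarrow>
        N e \<omega> \<subseteq> {0<..} \<and> (\<forall>b. finite (N e \<omega> \<inter> {..b}))) \<and>
     (\<forall>J :: ((site \<times> site) \<times> real \<times> real) set.
        finite J \<longrightarrow>
        (\<forall>(e, a, b) \<in> J. Hedge e \<and> 0 \<le> a \<and> a < b) \<longrightarrow>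
        (\<forall>(e, a, b) \<in> J. \<forall>(e', a', b') \<in> J. (e, a, b) \<noteq> (e', a', b') \<longrightarrow> e = e' \<longrightarrow>
            {a<..b} \<inter> {a'<..b'} = {}) \<longrightarrow>
        prob_space.indep_vars M (\<lambda>_. count_space UNIV)
           (\<lambda>(e, a, b) \<omega>. cnt (N e \<omega>) a b) J \<and>
        (\<forall>(e, a, b) \<in> J.
           distr M (count_space UNIV) (\<lambda>\<omega>. cnt (N e \<omega>) a b)
             = measure_pmf (poisson_pmf (rate e * (b - a)))))"

definition interface :: "(site \<times> site \<Rightarrow> 'a \<Rightarrow> real set) \<Rightarrow> real \<Rightarrow> 'a \<Rightarrow> site set" where
  "interface N t \<omega> = {y. \<exists>ys ss.
      length ys = Suc (length ss) \<and> hd ys = (0, 0) \<and> last ys = y \<and>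
      (\<forall>z \<in> set ys. inH z) \<and>
      (\<forall>i < length ss. nn (ys ! i) (ys ! Suc i)) \<and>
      (\<forall>i < length ss. 0 < ss ! i \<and> ss ! i \<le> t \<and>
          ss ! i \<in> N (ys ! i, ys ! Suc i) \<omega>) \<and>
      (\<forall>i. Suc i < length ss \<longrightarrow> ss ! i < ss ! Suc i)}"

definition enorm :: "site \<Rightarrow> real" where
  "enorm x = sqrt (real_of_int (fst x) ^ 2 + real_of_int (snd x) ^ 2)"

end

theory Submission
  imports Defs
begin

(* If the interface leaves the ball of radius k by time t, loop erasure of a shortest
   witness gives a self-avoiding path gamma of k nearest-neighbour steps from the origin
   whose edges ring in order before t; its i-th edge starts at height at most i - 1, so its
   rate r_i is at most sqrt (i + 1).  Cut [0, t] into k slots of length h = t / k and choose,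
   greedily along gamma, the slot G_i of the first ring of edge i after the start of slot
   G_(i-1).  The gaps w_i = G_i - G_(i-1) sum to less than k, and by independence of the
   clocks the event "gamma, w" has probability prod_i q_i^w_i (1 - q_i), q_i = exp (- r_i h).
   This is also the probability that every T_i lies in (w_i c_i, (w_i + 1) c_i] with
   c_i = r_i h / lambda_i <= h / 4; these events are disjoint in w and force
   sum T_i < (sum w_i + k) h / 4 < t.  There are at most 4^k walks gamma. *)

section \<open>Independent Poisson clocks and exponential variables\<close>

lemma (in prob_space) indep_vars_prob_Ball:
  assumes indep: "indep_vars M' X J" and J: "finite J" and B: "\<And>j. j \<in> J \<Longrightarrow> B j \<in> sets (M' j)"
  shows "{\<omega> \<in> space M. \<forall>j\<in>J. X j \<omega> \<in> B j} \<in> events"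
    and "prob {\<omega> \<in> space M. \<forall>j\<in>J. X j \<omega> \<in> B j} = (\<Prod>j\<in>J. prob {\<omega> \<in> space M. X j \<omega> \<in> B j})"
proof -
  have X: "\<And>j. j \<in> J \<Longrightarrow> X j \<in> measurable M (M' j)"
    using indep by (simp add: indep_vars_def)
  show "{\<omega> \<in> space M. \<forall>j\<in>J. X j \<omega> \<in> B j} \<in> events"
    using J X B by measurable
  show "prob {\<omega> \<in> space M. \<forall>j\<in>J. X j \<omega> \<in> B j} = (\<Prod>j\<in>J. prob {\<omega> \<in> space M. X j \<omega> \<in> B j})"
  proof (cases "J = {}")
    case False
    have "{\<omega> \<in> space M. \<forall>j\<in>J. X j \<omega> \<in> B j} = (\<Inter>j\<in>J. X j -` B j \<inter> space M)"
      using False by auto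
    also have "prob \<dots> = (\<Prod>j\<in>J. prob (X j -` B j \<inter> space M))"
      using indep False J B by (rule indep_varsD_finite)
    finally show ?thesis
      by (simp add: vimage_def Int_def conj_commute)
  qed (simp add: prob_space)
qed

lemma indep_poisson_family_counts:
  fixes N :: "site \<times> site \<Rightarrow> 'a \<Rightarrow> real set"
    and e :: "'i \<Rightarrow> site \<times> site" and a b :: "'i \<Rightarrow> real" and A :: "'i \<Rightarrow> nat set"
  assumes M: "prob_space M" and N: "indep_poisson_family M N" and I: "finite I"
    and edge: "\<And>x. x \<in> I \<Longrightarrow> Hedge (e x) \<and> 0 \<le> a x \<and> a x < b x"
    and disjoint: "\<And>x y. x \<in> I \<Longrightarrow> y \<in> I \<Longrightarrow> x \<noteq> y \<Longrightarrow> e x = e y \<Longrightarrow>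
      {a x<..b x} \<inter> {a y<..b y} = {}"
  shows "{\<omega> \<in> space M. \<forall>x\<in>I. cnt (N (e x) \<omega>) (a x) (b x) \<in> A x} \<in> sets M"
    and "measure M {\<omega> \<in> space M. \<forall>x\<in>I. cnt (N (e x) \<omega>) (a x) (b x) \<in> A x}
      = (\<Prod>x\<in>I. measure (poisson_pmf (rate (e x) * (b x - a x))) (A x))"
proof -
  interpret prob_space M by (fact M)
  define f where "f x = (e x, a x, b x)" for x
  define X :: "(site \<times> site) \<times> real \<times> real \<Rightarrow> 'a \<Rightarrow> nat" where
    "X = (\<lambda>(e, a, b) \<omega>. cnt (N e \<omega>) a b)"
  define B where "B = A \<circ> inv_into I f"
  have inj: "inj_on f I"
  proof (rule inj_onI)
    fix x y assume "x \<in> I" "y \<in> I" "f x = f y"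
    with disjoint[of x y] edge[of x] show "x = y" by (force simp: f_def)
  qed
  have J: "finite (f ` I)"
    using I by simp
  have "\<forall>(e, a, b) \<in> f ` I. Hedge e \<and> 0 \<le> a \<and> a < b"
    using edge by (auto simp: f_def)
  moreover have "\<forall>(e, a, b) \<in> f ` I. \<forall>(e', a', b') \<in> f ` I. (e, a, b) \<noteq> (e', a', b') \<longrightarrow> e = e' \<longrightarrow>
      {a<..b} \<inter> {a'<..b'} = {}"
    using disjoint by (auto simp: f_def)
  ultimately have indep: "indep_vars (\<lambda>_. count_space UNIV) X (f ` I)"
    and distr: "\<forall>(e, a, b) \<in> f ` I. distr M (count_space UNIV) (X (e, a, b))
      = measure_pmf (poisson_pmf (rate e * (b - a)))"
    using N J unfolding indep_poisson_family_def X_def by auto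
  have Xf: "X (f x) = (\<lambda>\<omega>. cnt (N (e x) \<omega>) (a x) (b x))" for x
    by (simp add: X_def f_def)
  have Bf: "B (f x) = A x" if "x \<in> I" for x
    using inj that by (simp add: B_def)
  have event: "{\<omega> \<in> space M. \<forall>x\<in>I. cnt (N (e x) \<omega>) (a x) (b x) \<in> A x}
      = {\<omega> \<in> space M. \<forall>j\<in>f ` I. X j \<omega> \<in> B j}"
    by (auto simp: Xf Bf)
  show "{\<omega> \<in> space M. \<forall>x\<in>I. cnt (N (e x) \<omega>) (a x) (b x) \<in> A x} \<in> sets M"
    unfolding event using indep J by (rule indep_vars_prob_Ball) simp
  have "prob {\<omega> \<in> space M. \<forall>j\<in>f ` I. X j \<omega> \<in> B j} = (\<Prod>j\<in>f ` I. prob {\<omega> \<in> space M. X j \<omega> \<in> B j})"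
    using indep J by (rule indep_vars_prob_Ball) simp
  also have "\<dots> = (\<Prod>x\<in>I. measure (distr M (count_space UNIV) (X (f x))) (A x))"
    using inj indep by (simp add: prod.reindex B_def measure_distr indep_vars_def vimage_def Int_def conj_commute)
  also have "\<dots> = (\<Prod>x\<in>I. measure (poisson_pmf (rate (e x) * (b x - a x))) (A x))"
    using distr by (auto intro!: prod.cong simp: f_def)
  finally show "measure M {\<omega> \<in> space M. \<forall>x\<in>I. cnt (N (e x) \<omega>) (a x) (b x) \<in> A x}
      = (\<Prod>x\<in>I. measure (poisson_pmf (rate (e x) * (b x - a x))) (A x))"
    unfolding event .
qed

lemma indep_poisson_family_locally_finite:
  "indep_poisson_family M N \<Longrightarrow> Hedge e \<Longrightarrow> \<omega> \<in> space M \<Longrightarrow> finite (N e \<omega> \<inter> {..b})"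
  unfolding indep_poisson_family_def by blast

lemma rate_pos: "0 < rate e"
  by (simp add: rate_def)

lemma measure_poisson_pmf_0: "0 < \<mu> \<Longrightarrow> measure (poisson_pmf \<mu>) {0} = exp (- \<mu>)"
  by (simp add: measure_pmf_single)

lemma measure_poisson_pmf_positive: "0 < \<mu> \<Longrightarrow> measure (poisson_pmf \<mu>) {1..} = 1 - exp (- \<mu>)"
proof -
  assume "0 < \<mu>"
  have "{1..} = space (measure_pmf (poisson_pmf \<mu>)) - {0::nat}"
    by auto
  then show ?thesis
    using measure_pmf.prob_compl[of "{0}" "poisson_pmf \<mu>"] measure_poisson_pmf_0[OF \<open>0 < \<mu>\<close>] by simp
qed

lemma prod_measure_poisson_silence_then_arrival:
  fixes r h :: real
  assumes "0 < r" and "0 < h"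
  shows "(\<Prod>b\<in>{b. b \<or> 0 < n}. measure (poisson_pmf (r * (if b then h else real n * h))) (if b then {1..} else {0}))
    = exp (- (r * h)) ^ n * (1 - exp (- (r * h)))"
proof (cases "n = 0")
  case True
  then have "{b. b \<or> 0 < n} = {True}"
    by auto
  with True show ?thesis
    using measure_poisson_pmf_positive[of "r * h"] assms by simp
next
  case False
  have "exp (- (r * (real n * h))) = exp (- (r * h)) ^ n"
    by (simp add: exp_of_nat_mult[symmetric] algebra_simps)
  with False show ?thesis
    using measure_poisson_pmf_positive[of "r * h"] measure_poisson_pmf_0[of "r * (real n * h)"] assms
    by (simp add: UNIV_bool)
qed

lemma cnt_eq_0_iff:
  assumes "finite (S \<inter> {..b})"
  shows "cnt S a b = 0 \<longleftrightarrow> S \<inter> {a<..b} = {}"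
proof -
  have "finite (S \<inter> {a<..b})"
    by (rule finite_subset[OF _ assms]) auto
  then show ?thesis
    by (simp add: cnt_def)
qed

lemma (in prob_space) exponential_prob_interval:
  assumes X: "distributed M lborel X (exponential_density l)" and l: "0 < l"
    and a: "0 \<le> a" "a \<le> b"
  shows "prob {\<omega> \<in> space M. X \<omega> \<in> {a<..b}} = exp (- a * l) - exp (- b * l)"
proof -
  have [measurable]: "X \<in> borel_measurable M"
    using distributed_measurable[OF X] by simp
  have "{\<omega> \<in> space M. a < X \<omega>} = {\<omega> \<in> space M. X \<omega> \<in> {a<..b}} \<union> {\<omega> \<in> space M. b < X \<omega>}"
    using a by auto
  then have "prob {\<omega> \<in> space M. a < X \<omega>}
      = prob {\<omega> \<in> space M. X \<omega> \<in> {a<..b}} + prob {\<omega> \<in> space M. b < X \<omega>}"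
    by (auto intro!: finite_measure_Union)
  moreover have "prob {\<omega> \<in> space M. a < X \<omega>} = exp (- a * l)" "prob {\<omega> \<in> space M. b < X \<omega>} = exp (- b * l)"
    using exponential_distributedD_gt[OF X _ l] a by auto
  ultimately show ?thesis
    by simp
qed

lemma (in prob_space) indep_exponentials_prob_slots:
  assumes indep: "indep_vars (\<lambda>_. borel) T K" and K: "finite K"
    and T: "\<And>i. i \<in> K \<Longrightarrow> distributed M lborel (T i) (exponential_density (l i))"
    and l: "\<And>i. i \<in> K \<Longrightarrow> 0 < l i" and c: "\<And>i. i \<in> K \<Longrightarrow> 0 < c i"
  shows "{\<omega> \<in> space M. \<forall>i\<in>K. T i \<omega> \<in> {real (w i) * c i <.. (real (w i) + 1) * c i}} \<in> events"
    and "prob {\<omega> \<in> space M. \<forall>i\<in>K. T i \<omega> \<in> {real (w i) * c i <.. (real (w i) + 1) * c i}}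
      = (\<Prod>i\<in>K. exp (- (c i * l i)) ^ w i * (1 - exp (- (c i * l i))))"
proof -
  show "{\<omega> \<in> space M. \<forall>i\<in>K. T i \<omega> \<in> {real (w i) * c i <.. (real (w i) + 1) * c i}} \<in> events"
    using indep K by (rule indep_vars_prob_Ball) simp
  have "prob {\<omega> \<in> space M. \<forall>i\<in>K. T i \<omega> \<in> {real (w i) * c i <.. (real (w i) + 1) * c i}}
      = (\<Prod>i\<in>K. prob {\<omega> \<in> space M. T i \<omega> \<in> {real (w i) * c i <.. (real (w i) + 1) * c i}})"
    using indep K by (rule indep_vars_prob_Ball) simp
  also have "\<dots> = (\<Prod>i\<in>K. exp (- (c i * l i)) ^ w i * (1 - exp (- (c i * l i))))"
  proof (rule prod.cong)
    fix i assume i: "i \<in> K"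
    have "prob {\<omega> \<in> space M. T i \<omega> \<in> {real (w i) * c i <.. (real (w i) + 1) * c i}}
        = exp (- (real (w i) * c i) * l i) - exp (- ((real (w i) + 1) * c i) * l i)"
      using c[OF i] by (intro exponential_prob_interval[OF T[OF i] l[OF i]]) auto
    also have "exp (- (real (w i) * c i) * l i) = exp (- (c i * l i)) ^ w i"
      by (simp add: exp_of_nat_mult[symmetric] algebra_simps)
    also have "exp (- ((real (w i) + 1) * c i) * l i) = exp (- (c i * l i)) ^ w i * exp (- (c i * l i))"
      by (simp add: exp_of_nat_mult[symmetric] exp_add[symmetric] algebra_simps)
    finally show "prob {\<omega> \<in> space M. T i \<omega> \<in> {real (w i) * c i <.. (real (w i) + 1) * c i}}
        = exp (- (c i * l i)) ^ w i * (1 - exp (- (c i * l i)))"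
      by (simp add: algebra_simps)
  qed simp
  finally show "prob {\<omega> \<in> space M. \<forall>i\<in>K. T i \<omega> \<in> {real (w i) * c i <.. (real (w i) + 1) * c i}}
      = (\<Prod>i\<in>K. exp (- (c i * l i)) ^ w i * (1 - exp (- (c i * l i))))" .
qed

lemma exponential_slot_events_disjoint:
  fixes c :: "'i \<Rightarrow> real"
  assumes "\<And>i. i \<in> K \<Longrightarrow> 0 < c i"
  shows "disjoint_family_on
    (\<lambda>w. {\<omega> \<in> space P. \<forall>i\<in>K. T i \<omega> \<in> {real (w i) * c i <.. (real (w i) + 1) * c i}}) (K \<rightarrow>\<^sub>E UNIV)"
unfolding disjoint_family_on_def
proof (intro ballI impI)
  fix w w' :: "'i \<Rightarrow> nat" assume "w \<in> K \<rightarrow>\<^sub>E UNIV" "w' \<in> K \<rightarrow>\<^sub>E UNIV" "w \<noteq> w'"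
  then obtain i where "i \<in> K" "w i \<noteq> w' i"
    using PiE_ext[of w K _ w'] by blast
  have "{real (w i) * c i <.. (real (w i) + 1) * c i} \<inter> {real (w' i) * c i <.. (real (w' i) + 1) * c i} = {}"
  proof (cases "w i < w' i")
    case True
    then have "(real (w i) + 1) * c i \<le> real (w' i) * c i"
      using assms[OF \<open>i \<in> K\<close>] by (intro mult_right_mono) auto
    then show ?thesis
      by auto
  next
    case False
    then have "(real (w' i) + 1) * c i \<le> real (w i) * c i"
      using assms[OF \<open>i \<in> K\<close>] \<open>w i \<noteq> w' i\<close> by (intro mult_right_mono) auto
    then show ?thesis
      by auto
  qed
  with \<open>i \<in> K\<close> show "{\<omega> \<in> space P. \<forall>i\<in>K. T i \<omega> \<in> {real (w i) * c i <.. (real (w i) + 1) * c i}} \<inter>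
      {\<omega> \<in> space P. \<forall>i\<in>K. T i \<omega> \<in> {real (w' i) * c i <.. (real (w' i) + 1) * c i}} = {}"
    by blast
qed

section \<open>Nearest-neighbour walks\<close>

definition lattice_steps :: "site set" where
  "lattice_steps = {(1, 0), (-1, 0), (0, 1), (0, -1)}"

lemma nn_iff_diff_in_lattice_steps: "nn x y \<longleftrightarrow> y - x \<in> lattice_steps"
  by (cases x; cases y) (auto simp: nn_def lattice_steps_def abs_if)

fun lattice_walks :: "nat \<Rightarrow> site list set" where
  "lattice_walks 0 = {[(0, 0)]}"
| "lattice_walks (Suc m) = (\<lambda>(\<gamma>, d). \<gamma> @ [last \<gamma> + d]) ` (lattice_walks m \<times> lattice_steps)"

lemma finite_lattice_walks: "finite (lattice_walks m)"
  by (induction m) (simp_all add: lattice_steps_def)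

lemma card_lattice_walks_le: "card (lattice_walks m) \<le> 4 ^ m"
proof (induction m)
  case (Suc m)
  have "card (lattice_walks (Suc m)) \<le> card (lattice_walks m \<times> lattice_steps)"
    unfolding lattice_walks.simps
    by (rule card_image_le) (simp add: finite_lattice_walks lattice_steps_def)
  also have "\<dots> = 4 * card (lattice_walks m)"
    by (simp add: card_cartesian_product lattice_steps_def)
  finally show ?case
    using Suc by simp
qed simp

lemma map_in_lattice_walks:
  assumes "Y 0 = (0, 0)" and "\<And>l. l < m \<Longrightarrow> nn (Y l) (Y (Suc l))"
  shows "map Y [0..<Suc m] \<in> lattice_walks m"
  using assms(2)
proof (induction m)
  case (Suc m)
  have "map Y [0..<Suc (Suc m)] = map Y [0..<Suc m] @ [last (map Y [0..<Suc m]) + (Y (Suc m) - Y m)]"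
    by simp
  moreover have "Y (Suc m) - Y m \<in> lattice_steps"
    using Suc.prems[of m] by (simp add: nn_iff_diff_in_lattice_steps)
  ultimately show ?case
    using Suc by (auto simp del: upt_Suc)
qed (simp add: assms(1))

section \<open>Self-avoiding timed paths\<close>

definition timed_path ::
  "(site \<times> site \<Rightarrow> 'a \<Rightarrow> real set) \<Rightarrow> real \<Rightarrow> 'a \<Rightarrow> (nat \<Rightarrow> site) \<Rightarrow> (nat \<Rightarrow> real) \<Rightarrow> nat \<Rightarrow> bool"
where
  "timed_path N t \<omega> Y S m \<longleftrightarrow> Y 0 = (0, 0) \<and> (\<forall>l\<le>m. inH (Y l)) \<and>
     (\<forall>l<m. nn (Y l) (Y (Suc l)) \<and> 0 < S l \<and> S l \<le> t \<and> S l \<in> N (Y l, Y (Suc l)) \<omega>) \<and>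
     (\<forall>l. Suc l < m \<longrightarrow> S l < S (Suc l))"

lemma timed_path_of_interface:
  assumes "y \<in> interface N t \<omega>"
  obtains Y S m where "timed_path N t \<omega> Y S m" and "Y m = y"
proof -
  obtain ys ss where ys: "length ys = Suc (length ss)" "hd ys = (0, 0)" "last ys = y"
      "\<forall>z \<in> set ys. inH z" "\<forall>i < length ss. nn (ys ! i) (ys ! Suc i)"
      "\<forall>i < length ss. 0 < ss ! i \<and> ss ! i \<le> t \<and> ss ! i \<in> N (ys ! i, ys ! Suc i) \<omega>"
      "\<forall>i. Suc i < length ss \<longrightarrow> ss ! i < ss ! Suc i"
    using assms unfolding interface_def by blast
  then have "ys \<noteq> []"
    by auto
  with ys have "timed_path N t \<omega> ((!) ys) ((!) ss) (length ss)" and "ys ! length ss = y"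
    by (auto simp: timed_path_def hd_conv_nth last_conv_nth less_Suc_eq_le[symmetric])
  then show thesis
    by (rule that)
qed

lemma timed_path_prefix: "timed_path N t \<omega> Y S m \<Longrightarrow> k \<le> m \<Longrightarrow> timed_path N t \<omega> Y S k"
  unfolding timed_path_def by auto

lemma timed_path_l1_norm_le:
  assumes "timed_path N t \<omega> Y S m" and "l \<le> m"
  shows "\<bar>fst (Y l)\<bar> + \<bar>snd (Y l)\<bar> \<le> int l"
  using assms(2)
proof (induction l)
  case (Suc l)
  then have "nn (Y l) (Y (Suc l))"
    using assms(1) by (simp add: timed_path_def)
  with Suc show ?case
    unfolding nn_def by linarith
qed (use assms(1) in \<open>simp add: timed_path_def\<close>)

lemma timed_path_times_less:
  assumes "timed_path N t \<omega> Y S m" and "i < j" and "j < m"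
  shows "S i < S j"
  using assms(2,3)
proof (induction j rule: less_Suc_induct)
  case (1 i)
  then show ?case
    using assms(1) by (simp add: timed_path_def)
qed auto

lemma enorm_le_l1_norm: "enorm x \<le> \<bar>fst x\<bar> + \<bar>snd x\<bar>"
  using sqrt_sum_squares_le_sum_abs by (simp add: enorm_def)

lemma timed_path_erase_loop:
  assumes path: "timed_path N t \<omega> Y S m" and "i < j" "j \<le> m" and loop: "Y i = Y j"
  obtains Y' S' where "timed_path N t \<omega> Y' S' (m - (j - i))" and "Y' (m - (j - i)) = Y m"
proof
  define d where "d = j - i"
  define Y' where "Y' l = (if l \<le> i then Y l else Y (l + d))" for l
  define S' where "S' l = (if l < i then S l else S (l + d))" for l
  have "i + d = j" "0 < d"
    using \<open>i < j\<close> by (auto simp: d_def)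
  then have shifted: "Y' l = Y (l + d)" if "i \<le> l" for l
    using loop that by (auto simp: Y'_def)
  have "Y' l = Y l" "Y' (Suc l) = Y (Suc l)" "S' l = S l" if "l < i" for l
    using that by (auto simp: Y'_def S'_def)
  with shifted path \<open>i + d = j\<close> \<open>j \<le> m\<close> have
    "\<forall>l<m - d. nn (Y' l) (Y' (Suc l)) \<and> 0 < S' l \<and> S' l \<le> t \<and> S' l \<in> N (Y' l, Y' (Suc l)) \<omega>"
    by (auto simp: timed_path_def S'_def not_less intro: less_imp_le)
  moreover have "S' l < S' (Suc l)" if "Suc l < m - d" for l
    using that timed_path_times_less[OF path, of l "Suc l + d"] path \<open>0 < d\<close>
    by (auto simp: S'_def timed_path_def)
  moreover have "\<forall>l\<le>m - d. inH (Y' l)" "Y' 0 = (0, 0)"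
    using path by (auto simp: timed_path_def Y'_def)
  ultimately show "timed_path N t \<omega> Y' S' (m - (j - i))"
    by (simp add: timed_path_def d_def)
  show "Y' (m - (j - i)) = Y m"
    using shifted[of "m - d"] \<open>i + d = j\<close> \<open>j \<le> m\<close> by (simp add: d_def)
qed

(* A shortest timed path ending outside the ball is self-avoiding: erasing a loop would shorten it. *)
lemma self_avoiding_timed_path:
  assumes "y \<in> interface N t \<omega>" and "enorm y > real k"
  obtains Y S where "timed_path N t \<omega> Y S k" and "inj_on Y {0..k}"
proof -
  define far where "far m \<longleftrightarrow> (\<exists>Y S. timed_path N t \<omega> Y S m \<and> enorm (Y m) > real k)" for m
  define m where "m = (LEAST m. far m)"
  have "far m"
    unfolding m_def using assms by (metis LeastI timed_path_of_interface far_def)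
  then obtain Y S where path: "timed_path N t \<omega> Y S m" and "enorm (Y m) > real k"
    unfolding far_def by blast
  have "inj_on Y {0..m}"
  proof (rule inj_onI, rule ccontr)
    fix i j assume "i \<in> {0..m}" "j \<in> {0..m}" "Y i = Y j" "i \<noteq> j"
    then obtain i j where "i < j" "j \<le> m" "Y i = Y j"
      by (metis atLeastAtMost_iff linorder_neqE_nat)
    then obtain Y' S' where "timed_path N t \<omega> Y' S' (m - (j - i))" "Y' (m - (j - i)) = Y m"
      using timed_path_erase_loop[OF path] by blast
    with \<open>enorm (Y m) > real k\<close> have "far (m - (j - i))"
      unfolding far_def by auto
    moreover have "m - (j - i) < m"
      using \<open>i < j\<close> \<open>j \<le> m\<close> by simp
    ultimately show False
      unfolding m_def by (blast dest: not_less_Least)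
  qed
  moreover have "real k < real m"
    using \<open>enorm (Y m) > real k\<close> enorm_le_l1_norm[of "Y m"] timed_path_l1_norm_le[OF path, of m]
    by linarith
  ultimately show thesis
    using that[of Y S] timed_path_prefix[OF path, of k] inj_on_subset[of Y "{0..m}" "{0..k}"] by simp
qed

section \<open>Greedy slots\<close>

(* Slot s is the interval (s h, (s + 1) h]; slot h x is the slot containing x > 0. *)
definition slot :: "real \<Rightarrow> real \<Rightarrow> nat" where
  "slot h x = nat (\<lceil>x / h\<rceil> - 1)"

lemma slot_bounds:
  fixes h x :: real
  assumes "0 < h" and "0 < x"
  shows "real (slot h x) * h < x" and "x \<le> (real (slot h x) + 1) * h"
proof -
  have "0 < \<lceil>x / h\<rceil>"
    using assms by simp
  then have "real (slot h x) = \<lceil>x / h\<rceil> - 1"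
    by (simp add: slot_def)
  moreover have "\<lceil>x / h\<rceil> - 1 < x / h" and "x / h \<le> \<lceil>x / h\<rceil>"
    by linarith+
  then have "(\<lceil>x / h\<rceil> - 1) * h < x" and "x \<le> \<lceil>x / h\<rceil> * h"
    by (simp_all only: pos_less_divide_eq[OF \<open>0 < h\<close>] pos_divide_le_eq[OF \<open>0 < h\<close>])
  ultimately show "real (slot h x) * h < x" and "x \<le> (real (slot h x) + 1) * h"
    by simp_all
qed

lemma slot_mono: "0 < h \<Longrightarrow> x \<le> y \<Longrightarrow> slot h x \<le> slot h y"
  unfolding slot_def by (intro nat_mono diff_right_mono ceiling_mono divide_right_mono) auto

lemma slot_less:
  fixes h x :: real
  assumes "0 < h" and "0 < x" and "x \<le> real n * h"
  shows "slot h x < n"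
proof -
  have "real (slot h x) * h < real n * h"
    using slot_bounds(1)[OF assms(1,2)] assms(3) by linarith
  then show ?thesis
    using assms(1) by simp
qed

fun greedy_slot :: "(nat \<Rightarrow> real set) \<Rightarrow> real \<Rightarrow> nat \<Rightarrow> nat" where
  "greedy_slot A h 0 = 0"
| "greedy_slot A h (Suc i) = (LEAST s. greedy_slot A h i \<le> s \<and>
     A (Suc i) \<inter> {real (greedy_slot A h i) * h <.. (real s + 1) * h} \<noteq> {})"

lemma greedy_slot_Suc:
  fixes h x :: real
  assumes "greedy_slot A h i \<le> s" and "x \<in> A (Suc i)"
    and "real (greedy_slot A h i) * h < x" and "x \<le> (real s + 1) * h"
  defines "g \<equiv> greedy_slot A h i" and "g' \<equiv> greedy_slot A h (Suc i)"
  shows "g \<le> g'" and "g' \<le> s"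
    and "A (Suc i) \<inter> {real g * h <.. real g' * h} = {}"
    and "A (Suc i) \<inter> {real g' * h <.. (real g' + 1) * h} \<noteq> {}"
proof -
  define P where "P s \<longleftrightarrow> g \<le> s \<and> A (Suc i) \<inter> {real g * h <.. (real s + 1) * h} \<noteq> {}" for s
  have g': "g' = (LEAST s. P s)"
    by (simp add: P_def g_def g'_def)
  have "P s"
    using assms by (auto simp: P_def)
  then have "P g'" and "g' \<le> s"
    unfolding g' by (auto intro: LeastI Least_le)
  then show "g \<le> g'" and "g' \<le> s"
    by (simp_all add: P_def)
  show empty: "A (Suc i) \<inter> {real g * h <.. real g' * h} = {}"
  proof (cases "g < g'")
    case True
    then have "\<not> P (g' - 1)"
      unfolding g' by (intro not_less_Least) auto
    with True show ?thesis
      by (simp add: P_def of_nat_diff)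
  qed (use \<open>g \<le> g'\<close> in auto)
  show "A (Suc i) \<inter> {real g' * h <.. (real g' + 1) * h} \<noteq> {}"
    using \<open>P g'\<close> empty unfolding P_def by fastforce
qed

lemma greedy_slot_first_arrival:
  fixes h :: real and \<tau> :: "nat \<Rightarrow> real"
  assumes "0 < h"
    and arrival: "\<And>i. i \<in> {1..k} \<Longrightarrow> \<tau> i \<in> A i \<and> 0 < \<tau> i"
    and increasing: "\<And>i. 1 \<le> i \<Longrightarrow> i < k \<Longrightarrow> \<tau> i \<le> \<tau> (Suc i)"
  shows "i \<in> {1..k} \<Longrightarrow> greedy_slot A h (i - 1) \<le> greedy_slot A h i \<and> greedy_slot A h i \<le> slot h (\<tau> i) \<and>
      A i \<inter> {real (greedy_slot A h (i - 1)) * h <.. real (greedy_slot A h i) * h} = {} \<and>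
      A i \<inter> {real (greedy_slot A h i) * h <.. (real (greedy_slot A h i) + 1) * h} \<noteq> {}"
proof (induction i)
  case (Suc j)
  have "greedy_slot A h j \<le> slot h (\<tau> (Suc j))"
  proof (cases j)
    case (Suc l)
    with Suc.IH Suc.prems have "greedy_slot A h j \<le> slot h (\<tau> j)"
      by simp
    also have "\<dots> \<le> slot h (\<tau> (Suc j))"
      using Suc.prems \<open>j = Suc l\<close> by (intro slot_mono increasing \<open>0 < h\<close>) auto
    finally show ?thesis .
  qed simp
  moreover have "\<tau> (Suc j) \<in> A (Suc j)" and "0 < \<tau> (Suc j)"
    using arrival Suc.prems by auto
  moreover note slot_bounds[OF \<open>0 < h\<close> \<open>0 < \<tau> (Suc j)\<close>]
  moreover from \<open>greedy_slot A h j \<le> slot h (\<tau> (Suc j))\<close> \<open>0 < h\<close>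
  have "real (greedy_slot A h j) * h \<le> real (slot h (\<tau> (Suc j))) * h"
    by simp
  ultimately show ?case
    using greedy_slot_Suc[of A h j "slot h (\<tau> (Suc j))" "\<tau> (Suc j)"] by simp
qed simp

definition gap_sum :: "(nat \<Rightarrow> nat) \<Rightarrow> nat \<Rightarrow> nat" where
  "gap_sum w i = (\<Sum>l = 1..i. w l)"

lemma gap_sum_step: "1 \<le> i \<Longrightarrow> gap_sum w i = gap_sum w (i - 1) + w i"
  by (cases i) (simp_all add: gap_sum_def)

definition gap_vectors :: "nat \<Rightarrow> nat \<Rightarrow> (nat \<Rightarrow> nat) set" where
  "gap_vectors n k = {w \<in> {1..k} \<rightarrow>\<^sub>E {..<n}. sum w {1..k} < n}"

lemma finite_gap_vectors: "finite (gap_vectors n k)"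
  unfolding gap_vectors_def by (rule finite_subset[of _ "{1..k} \<rightarrow>\<^sub>E {..<n}"]) (auto intro: finite_PiE)

lemma greedy_gaps:
  fixes h :: real and \<tau> :: "nat \<Rightarrow> real"
  assumes "0 < h" and "0 < n"
    and arrival: "\<And>i. i \<in> {1..k} \<Longrightarrow> \<tau> i \<in> A i \<and> 0 < \<tau> i \<and> \<tau> i \<le> n * h"
    and increasing: "\<And>i. 1 \<le> i \<Longrightarrow> i < k \<Longrightarrow> \<tau> i \<le> \<tau> (Suc i)"
  obtains w where "w \<in> gap_vectors n k"
    and "\<And>i. i \<in> {1..k} \<Longrightarrow> A i \<inter> {real (gap_sum w (i - 1)) * h <.. real (gap_sum w i) * h} = {}"
    and "\<And>i. i \<in> {1..k} \<Longrightarrow> A i \<inter> {real (gap_sum w i) * h <.. (real (gap_sum w i) + 1) * h} \<noteq> {}"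
proof -
  define g where "g = greedy_slot A h"
  define w where "w = restrict (\<lambda>i. g i - g (i - 1)) {1..k}"
  have g: "g (i - 1) \<le> g i \<and> g i \<le> slot h (\<tau> i) \<and>
      A i \<inter> {real (g (i - 1)) * h <.. real (g i) * h} = {} \<and>
      A i \<inter> {real (g i) * h <.. (real (g i) + 1) * h} \<noteq> {}" if "i \<in> {1..k}" for i
    unfolding g_def
    by (rule greedy_slot_first_arrival[where A = A and \<tau> = \<tau> and k = k]) (use assms that in auto)
  have g_less: "g i < n" if "i \<in> {1..k}" for i
    using g[OF that] slot_less[OF \<open>0 < h\<close>, of "\<tau> i" n] arrival[OF that] by auto
  have gap_sum: "gap_sum w i = g i" if "i \<le> k" for i
    using that
  proof (induction i)
    case (Suc i)
    then show ?case
      using g[of "Suc i"] arrival by (simp add: gap_sum_def w_def)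
  qed (simp add: gap_sum_def g_def)
  have "w \<in> gap_vectors n k"
  proof -
    have "w i < n" if "i \<in> {1..k}" for i
      using g_less[OF that] that by (simp add: w_def)
    moreover have "sum w {1..k} < n"
      using gap_sum[of k] g_less[of k] \<open>0 < n\<close> by (cases k) (auto simp: gap_sum_def)
    ultimately show ?thesis
      by (auto simp: gap_vectors_def w_def)
  qed
  moreover have "gap_sum w (i - 1) = g (i - 1)" "gap_sum w i = g i" if "i \<in> {1..k}" for i
    using that gap_sum by auto
  ultimately show thesis
    using that g arrival by auto
qed

lemma sum_slot_bounds_less:
  fixes h :: real and c x :: "nat \<Rightarrow> real"
  assumes "w \<in> gap_vectors k k" and "0 < h"
    and "\<And>i. i \<in> {1..k} \<Longrightarrow> 0 \<le> c i \<and> c i \<le> h / 2 \<and> x i \<le> (real (w i) + 1) * c i"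
  shows "(\<Sum>i=1..k. x i) < real k * h"
proof -
  have "sum w {1..k} < k"
    using assms(1) by (simp add: gap_vectors_def)
  then have "real (sum w {1..k}) + 1 \<le> real k"
    by (metis Suc_leI add.commute of_nat_Suc of_nat_le_iff plus_1_eq_Suc)
  have "(\<Sum>i=1..k. x i) \<le> (\<Sum>i=1..k. (real (w i) + 1) * (h / 2))"
  proof (rule sum_mono)
    fix i assume "i \<in> {1..k}"
    with assms(3) have "x i \<le> (real (w i) + 1) * c i" "c i \<le> h / 2"
      by auto
    then show "x i \<le> (real (w i) + 1) * (h / 2)"
      by (meson mult_left_mono of_nat_0_le_iff order_trans add_nonneg_nonneg zero_le_one)
  qed
  also have "\<dots> = (\<Sum>i=1..k. real (w i) + 1) * (h / 2)"
    by (rule sum_distrib_right[symmetric])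
  also have "\<dots> = (real (sum w {1..k}) + real k) * (h / 2)"
    by (simp add: sum.distrib)
  also have "\<dots> \<le> (2 * real k - 1) * (h / 2)"
    using \<open>real (sum w {1..k}) + 1 \<le> real k\<close> \<open>0 < h\<close> by (intro mult_right_mono) auto
  also have "\<dots> < real k * h"
    using \<open>0 < h\<close> by (simp add: field_simps)
  finally show ?thesis .
qed

section \<open>Comparison with exponential clocks\<close>

definition path_edge :: "site list \<Rightarrow> nat \<Rightarrow> site \<times> site" where
  "path_edge \<gamma> i = (\<gamma> ! (i - 1), \<gamma> ! i)"

lemma path_edge_map_upt: "i \<in> {1..k} \<Longrightarrow> path_edge (map Y [0..<Suc k]) i = (Y (i - 1), Y i)"
  by (auto simp: path_edge_def nth_map_upt simp del: upt_Suc)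

definition admissible_walks :: "nat \<Rightarrow> site list set" where
  "admissible_walks k = {\<gamma> \<in> lattice_walks k. inj_on (path_edge \<gamma>) {1..k} \<and>
     (\<forall>i\<in>{1..k}. Hedge (path_edge \<gamma> i) \<and> rate (path_edge \<gamma> i) \<le> sqrt (real i + 1))}"

lemma finite_admissible_walks: "finite (admissible_walks k)"
  using finite_lattice_walks by (simp add: admissible_walks_def)

lemma card_admissible_walks_le: "card (admissible_walks k) \<le> 4 ^ k"
proof -
  have "admissible_walks k \<subseteq> lattice_walks k"
    by (auto simp: admissible_walks_def)
  then show ?thesis
    using card_mono[OF finite_lattice_walks] card_lattice_walks_le le_trans by blast
qed

lemma self_avoiding_timed_path_admissible:
  assumes path: "timed_path N t \<omega> Y S k" and "inj_on Y {0..k}"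
  shows "map Y [0..<Suc k] \<in> admissible_walks k"
proof -
  define \<gamma> where "\<gamma> = map Y [0..<Suc k]"
  have edge: "path_edge \<gamma> i = (Y (i - 1), Y i)" if "i \<in> {1..k}" for i
    using that unfolding \<gamma>_def by (rule path_edge_map_upt)
  have "inj_on (path_edge \<gamma>) {1..k}"
  proof (rule inj_onI)
    fix i j assume "i \<in> {1..k}" "j \<in> {1..k}" "path_edge \<gamma> i = path_edge \<gamma> j"
    with \<open>inj_on Y {0..k}\<close> show "i = j"
      by (auto simp: edge dest: inj_onD)
  qed
  moreover have "Hedge (Y (i - 1), Y i)" if "i \<in> {1..k}" for i
    using path that by (auto simp: timed_path_def Hedge_def dest: spec[of _ "i - 1"])
  moreover have "rate (Y (i - 1), Y i) \<le> sqrt (real i + 1)" if "i \<in> {1..k}" for i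
  proof -
    have "i - 1 \<le> k"
      using that by auto
    from timed_path_l1_norm_le[OF path this] that
    have "\<bar>fst (Y (i - 1))\<bar> + \<bar>snd (Y (i - 1))\<bar> \<le> int i"
      by simp
    then have "snd (Y (i - 1)) \<le> int i + 1"
      by linarith
    then show ?thesis
      by (simp add: rate_def)
  qed
  moreover have "\<gamma> \<in> lattice_walks k"
    unfolding \<gamma>_def using path by (intro map_in_lattice_walks) (auto simp: timed_path_def)
  ultimately have "\<gamma> \<in> admissible_walks k"
    by (simp add: admissible_walks_def edge)
  then show ?thesis
    by (simp only: \<gamma>_def)
qed

definition first_arrivals_in_slots ::
  "(site \<times> site \<Rightarrow> 'a \<Rightarrow> real set) \<Rightarrow> nat \<Rightarrow> site list \<Rightarrow> real \<Rightarrow> (nat \<Rightarrow> nat) \<Rightarrow> 'a \<Rightarrow> bool"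
where
  "first_arrivals_in_slots N k \<gamma> h w \<omega> \<longleftrightarrow> (\<forall>i\<in>{1..k}.
     N (path_edge \<gamma> i) \<omega> \<inter> {real (gap_sum w (i - 1)) * h <.. real (gap_sum w i) * h} = {} \<and>
     N (path_edge \<gamma> i) \<omega> \<inter> {real (gap_sum w i) * h <.. (real (gap_sum w i) + 1) * h} \<noteq> {})"

lemma interface_escape_subset:
  assumes "0 < t" and "1 \<le> k"
  shows "{\<omega> \<in> space M. \<exists>y \<in> interface N t \<omega>. enorm y > real k}
    \<subseteq> (\<Union>\<gamma>\<in>admissible_walks k. \<Union>w\<in>gap_vectors k k.
          {\<omega> \<in> space M. first_arrivals_in_slots N k \<gamma> (t / k) w \<omega>})"
proof clarify
  fix \<omega> y assume "\<omega> \<in> space M" and y: "y \<in> interface N t \<omega>" "enorm y > real k"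
  obtain Y S where path: "timed_path N t \<omega> Y S k" and "inj_on Y {0..k}"
    using self_avoiding_timed_path[OF y] by blast
  define \<gamma> where "\<gamma> = map Y [0..<Suc k]"
  have "\<gamma> \<in> admissible_walks k"
    unfolding \<gamma>_def using path \<open>inj_on Y {0..k}\<close> by (rule self_avoiding_timed_path_admissible)
  have edge: "path_edge \<gamma> i = (Y (i - 1), Y i)" if "i \<in> {1..k}" for i
    using that unfolding \<gamma>_def by (rule path_edge_map_upt)
  have arrival: "S (i - 1) \<in> N (path_edge \<gamma> i) \<omega> \<and> 0 < S (i - 1) \<and> S (i - 1) \<le> real k * (t / k)"
    if "i \<in> {1..k}" for i
    using path that \<open>1 \<le> k\<close> by (auto simp: timed_path_def edge dest: spec[of _ "i - 1"])
  have increasing: "S (i - 1) \<le> S (Suc i - 1)" if "1 \<le> i" "i < k" for i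
    using path that by (auto simp: timed_path_def dest: spec[of _ "i - 1"])
  obtain w where "w \<in> gap_vectors k k"
    and "\<And>i. i \<in> {1..k} \<Longrightarrow> N (path_edge \<gamma> i) \<omega> \<inter>
       {real (gap_sum w (i - 1)) * (t / k) <.. real (gap_sum w i) * (t / k)} = {}"
    and "\<And>i. i \<in> {1..k} \<Longrightarrow> N (path_edge \<gamma> i) \<omega> \<inter>
       {real (gap_sum w i) * (t / k) <.. (real (gap_sum w i) + 1) * (t / k)} \<noteq> {}"
    by (rule greedy_gaps[where A = "\<lambda>i. N (path_edge \<gamma> i) \<omega>" and \<tau> = "\<lambda>i. S (i - 1)", OF _ _ arrival increasing])
      (use \<open>0 < t\<close> \<open>1 \<le> k\<close> in auto)
  then have "first_arrivals_in_slots N k \<gamma> (t / k) w \<omega>"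
    by (simp add: first_arrivals_in_slots_def)
  with \<open>w \<in> gap_vectors k k\<close> \<open>\<gamma> \<in> admissible_walks k\<close> \<open>\<omega> \<in> space M\<close>
  show "\<omega> \<in> (\<Union>\<gamma>\<in>admissible_walks k. \<Union>w\<in>gap_vectors k k.
          {\<omega> \<in> space M. first_arrivals_in_slots N k \<gamma> (t / k) w \<omega>})"
    by blast
qed

(* The index (i, True) stands for the slot in which edge i rings, (i, False) for the silent
   stretch before it; the latter is omitted when w i = 0, as its interval is then empty. *)
lemma first_arrivals_in_slots_iff_counts:
  fixes h :: real
  assumes finite: "\<And>i b. i \<in> {1..k} \<Longrightarrow> finite (N (path_edge \<gamma> i) \<omega> \<inter> {..b})"
  shows "first_arrivals_in_slots N k \<gamma> h w \<omega> \<longleftrightarrow>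
    (\<forall>(i, b) \<in> Sigma {1..k} (\<lambda>i. {b. b \<or> 0 < w i}).
       cnt (N (path_edge \<gamma> i) \<omega>)
         (if b then real (gap_sum w i) * h else real (gap_sum w (i - 1)) * h)
         (if b then (real (gap_sum w i) + 1) * h else real (gap_sum w i) * h)
       \<in> (if b then {1..} else {0}))"
proof -
  have sigma: "(\<forall>(i, b) \<in> Sigma {1..k} (\<lambda>i. {b. b \<or> 0 < w i}). P i b)
      \<longleftrightarrow> (\<forall>i\<in>{1..k}. P i True \<and> (0 < w i \<longrightarrow> P i False))" for P
    by (auto simp: split_paired_Ball_Sigma Ball_def all_bool_eq)
  have "N (path_edge \<gamma> i) \<omega> \<inter> {real (gap_sum w (i - 1)) * h <.. real (gap_sum w i) * h} = {}
      \<longleftrightarrow> (0 < w i \<longrightarrow> cnt (N (path_edge \<gamma> i) \<omega>) (real (gap_sum w (i - 1)) * h) (real (gap_sum w i) * h) = 0)"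
    if "i \<in> {1..k}" for i
    using that gap_sum_step[of i w] cnt_eq_0_iff[OF finite[OF that]] by auto
  moreover have "N (path_edge \<gamma> i) \<omega> \<inter> {real (gap_sum w i) * h <.. (real (gap_sum w i) + 1) * h} \<noteq> {}
      \<longleftrightarrow> cnt (N (path_edge \<gamma> i) \<omega>) (real (gap_sum w i) * h) ((real (gap_sum w i) + 1) * h) \<in> {1..}"
    if "i \<in> {1..k}" for i
    using cnt_eq_0_iff[OF finite[OF that]] by (simp add: Suc_le_eq flip: neq0_conv)
  ultimately show ?thesis
    unfolding sigma first_arrivals_in_slots_def by auto
qed

lemma measure_first_arrivals_in_slots:
  fixes h :: real
  assumes M: "prob_space M" and N: "indep_poisson_family M N" and "0 < h"
    and edges: "\<And>i. i \<in> {1..k} \<Longrightarrow> Hedge (path_edge \<gamma> i)" and distinct: "inj_on (path_edge \<gamma>) {1..k}"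
  defines "q i \<equiv> exp (- (rate (path_edge \<gamma> i) * h))"
  shows "{\<omega> \<in> space M. first_arrivals_in_slots N k \<gamma> h w \<omega>} \<in> sets M"
    and "measure M {\<omega> \<in> space M. first_arrivals_in_slots N k \<gamma> h w \<omega>} = (\<Prod>i=1..k. q i ^ w i * (1 - q i))"
proof -
  define I where "I = Sigma {1..k} (\<lambda>i. {b. b \<or> 0 < w i})"
  define e where "e = (\<lambda>(i::nat, b::bool). path_edge \<gamma> i)"
  define lo where "lo = (\<lambda>(i, b). if b then real (gap_sum w i) * h else real (gap_sum w (i - 1)) * h)"
  define hi where "hi = (\<lambda>(i, b). if b then (real (gap_sum w i) + 1) * h else real (gap_sum w i) * h)"
  define A :: "nat \<times> bool \<Rightarrow> nat set" where "A = (\<lambda>(i, b). if b then {1..} else {0})"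
  have "first_arrivals_in_slots N k \<gamma> h w \<omega> \<longleftrightarrow> (\<forall>x\<in>I. cnt (N (e x) \<omega>) (lo x) (hi x) \<in> A x)"
    if "\<omega> \<in> space M" for \<omega>
  proof -
    have "finite (N (path_edge \<gamma> i) \<omega> \<inter> {..b})" if "i \<in> {1..k}" for i b
      using N edges[OF that] \<open>\<omega> \<in> space M\<close> by (rule indep_poisson_family_locally_finite)
    then have "first_arrivals_in_slots N k \<gamma> h w \<omega> \<longleftrightarrow>
      (\<forall>(i, b) \<in> I. cnt (N (path_edge \<gamma> i) \<omega>)
         (if b then real (gap_sum w i) * h else real (gap_sum w (i - 1)) * h)
         (if b then (real (gap_sum w i) + 1) * h else real (gap_sum w i) * h)
       \<in> (if b then {1..} else {0}))"
      unfolding I_def by (rule first_arrivals_in_slots_iff_counts)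
    then show ?thesis
      by (simp add: e_def lo_def hi_def A_def split_beta)
  qed
  then have event: "{\<omega> \<in> space M. first_arrivals_in_slots N k \<gamma> h w \<omega>}
      = {\<omega> \<in> space M. \<forall>x\<in>I. cnt (N (e x) \<omega>) (lo x) (hi x) \<in> A x}"
    by blast
  have "finite I"
    by (simp add: I_def)
  have interval: "Hedge (e x) \<and> 0 \<le> lo x \<and> lo x < hi x" if "x \<in> I" for x
    using that edges gap_sum_step[of "fst x" w] \<open>0 < h\<close>
    by (auto simp: I_def e_def lo_def hi_def split: prod.splits)
  have disjoint: "{lo x<..hi x} \<inter> {lo y<..hi y} = {}" if "x \<in> I" "y \<in> I" "x \<noteq> y" "e x = e y" for x y
    using that inj_onD[OF distinct] by (auto simp: I_def e_def lo_def hi_def split: prod.splits)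
  have counts: "{\<omega> \<in> space M. \<forall>x\<in>I. cnt (N (e x) \<omega>) (lo x) (hi x) \<in> A x} \<in> sets M"
    "measure M {\<omega> \<in> space M. \<forall>x\<in>I. cnt (N (e x) \<omega>) (lo x) (hi x) \<in> A x}
      = (\<Prod>x\<in>I. measure (poisson_pmf (rate (e x) * (hi x - lo x))) (A x))"
    by (rule indep_poisson_family_counts[OF M N \<open>finite I\<close>]; (rule interval disjoint; assumption)+)+
  show "{\<omega> \<in> space M. first_arrivals_in_slots N k \<gamma> h w \<omega>} \<in> sets M"
    unfolding event by (fact counts(1))
  define p where "p x = measure (poisson_pmf (rate (e x) * (hi x - lo x))) (A x)" for x
  have p: "p (i, b)
      = measure (poisson_pmf (rate (path_edge \<gamma> i) * (if b then h else real (w i) * h))) (if b then {1..} else {0})"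
    if "i \<in> {1..k}" for i b
    using gap_sum_step[of i w] that by (cases b) (simp_all add: p_def e_def lo_def hi_def A_def algebra_simps)
  have "(\<Prod>x\<in>I. p x) = (\<Prod>i=1..k. \<Prod>b\<in>{b. b \<or> 0 < w i}. p (i, b))"
    by (simp add: I_def prod.Sigma)
  also have "\<dots> = (\<Prod>i=1..k. \<Prod>b\<in>{b. b \<or> 0 < w i}.
      measure (poisson_pmf (rate (path_edge \<gamma> i) * (if b then h else real (w i) * h))) (if b then {1..} else {0}))"
    using p by (intro prod.cong refl) auto
  also have "\<dots> = (\<Prod>i=1..k. q i ^ w i * (1 - q i))"
    unfolding q_def using \<open>0 < h\<close> rate_pos by (intro prod.cong refl prod_measure_poisson_silence_then_arrival)
  finally show "measure M {\<omega> \<in> space M. first_arrivals_in_slots N k \<gamma> h w \<omega>} = (\<Prod>i=1..k. q i ^ w i * (1 - q i))"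
    unfolding event counts(2) p_def[symmetric] .
qed

lemma measure_first_arrivals_eq_exponential_slots:
  fixes T :: "nat \<Rightarrow> 'b \<Rightarrow> real" and l :: "nat \<Rightarrow> real" and h :: real
  assumes M: "prob_space M" and N: "indep_poisson_family M N"
    and P: "prob_space P" and indep: "prob_space.indep_vars P (\<lambda>_. borel) T {1..k}"
    and T: "\<And>i. i \<in> {1..k} \<Longrightarrow> distributed P lborel (T i) (exponential_density (l i))"
    and l: "\<And>i. 0 < l i" and "0 < h" and \<gamma>: "\<gamma> \<in> admissible_walks k"
  defines "c i \<equiv> rate (path_edge \<gamma> i) * h / l i"
  shows "{\<omega> \<in> space P. \<forall>i\<in>{1..k}. T i \<omega> \<in> {real (w i) * c i <.. (real (w i) + 1) * c i}} \<in> sets P"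
    and "measure P {\<omega> \<in> space P. \<forall>i\<in>{1..k}. T i \<omega> \<in> {real (w i) * c i <.. (real (w i) + 1) * c i}}
      = measure M {\<omega> \<in> space M. first_arrivals_in_slots N k \<gamma> h w \<omega>}"
proof -
  have c: "0 < c i" "c i * l i = rate (path_edge \<gamma> i) * h" for i
    using l[of i] \<open>0 < h\<close> rate_pos[of "path_edge \<gamma> i"] by (simp_all add: c_def)
  show "{\<omega> \<in> space P. \<forall>i\<in>{1..k}. T i \<omega> \<in> {real (w i) * c i <.. (real (w i) + 1) * c i}} \<in> sets P"
    using c(1) by (intro prob_space.indep_exponentials_prob_slots(1)[OF P indep]) (auto intro: T l)
  have "measure P {\<omega> \<in> space P. \<forall>i\<in>{1..k}. T i \<omega> \<in> {real (w i) * c i <.. (real (w i) + 1) * c i}}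
      = (\<Prod>i\<in>{1..k}. exp (- (c i * l i)) ^ w i * (1 - exp (- (c i * l i))))"
    using c(1) by (intro prob_space.indep_exponentials_prob_slots(2)[OF P indep]) (auto intro: T l)
  also have "\<dots> = measure M {\<omega> \<in> space M. first_arrivals_in_slots N k \<gamma> h w \<omega>}"
    unfolding c(2) using \<gamma>
    by (intro measure_first_arrivals_in_slots(2)[OF M N \<open>0 < h\<close>, symmetric]) (auto simp: admissible_walks_def)
  finally show "measure P {\<omega> \<in> space P. \<forall>i\<in>{1..k}. T i \<omega> \<in> {real (w i) * c i <.. (real (w i) + 1) * c i}}
      = measure M {\<omega> \<in> space M. first_arrivals_in_slots N k \<gamma> h w \<omega>}" .
qed

lemma sum_measure_first_arrivals_le:
  fixes T :: "nat \<Rightarrow> 'b \<Rightarrow> real" and t :: real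
  assumes M: "prob_space M" and N: "indep_poisson_family M N"
    and P: "prob_space P" and indep: "prob_space.indep_vars P (\<lambda>_. borel) T {1..k}"
    and T: "\<forall>i \<in> {1..k}. distributed P lborel (T i) (exponential_density (4 * sqrt (real i + 1)))"
    and "0 < t" and "1 \<le> k" and \<gamma>: "\<gamma> \<in> admissible_walks k"
  shows "(\<Sum>w\<in>gap_vectors k k. measure M {\<omega> \<in> space M. first_arrivals_in_slots N k \<gamma> (t / k) w \<omega>})
    \<le> measure P {\<omega> \<in> space P. (\<Sum>i = 1..k. T i \<omega>) < t}"
proof -
  interpret P: prob_space P by (fact P)
  define h where "h = t / k"
  define l :: "nat \<Rightarrow> real" where "l i = 4 * sqrt (real i + 1)" for i
  define c where "c i = rate (path_edge \<gamma> i) * h / l i" for i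
  define F where "F w = {\<omega> \<in> space P. \<forall>i\<in>{1..k}. T i \<omega> \<in> {real (w i) * c i <.. (real (w i) + 1) * c i}}"
    for w :: "nat \<Rightarrow> nat"
  have "0 < h"
    using \<open>0 < t\<close> \<open>1 \<le> k\<close> by (simp add: h_def)
  have l: "0 < l i" for i
    by (simp add: l_def)
  have "distributed P lborel (T i) (exponential_density (l i))" if "i \<in> {1..k}" for i
    using T that by (simp add: l_def)
  then have F: "F w \<in> P.events" "P.prob (F w) = measure M {\<omega> \<in> space M. first_arrivals_in_slots N k \<gamma> h w \<omega>}" for w
    unfolding F_def c_def
    by (rule measure_first_arrivals_eq_exponential_slots[where l = l, OF M N P indep _ l \<open>0 < h\<close> \<gamma>]; simp)+
  have c: "0 < c i \<and> c i \<le> h / 2" if "i \<in> {1..k}" for i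
  proof -
    have "rate (path_edge \<gamma> i) \<le> sqrt (real i + 1)"
      using \<gamma> that by (simp add: admissible_walks_def)
    then have "rate (path_edge \<gamma> i) * h \<le> (h / 4) * l i"
      using \<open>0 < h\<close> by (simp add: l_def)
    then show ?thesis
      using l[of i] \<open>0 < h\<close> rate_pos[of "path_edge \<gamma> i"] by (simp add: c_def divide_le_eq)
  qed
  then have "disjoint_family_on F ({1..k} \<rightarrow>\<^sub>E UNIV)"
    unfolding F_def by (intro exponential_slot_events_disjoint) simp
  then have disjoint: "disjoint_family_on F (gap_vectors k k)"
    by (rule disjoint_family_on_mono[rotated]) (auto simp: gap_vectors_def)
  have "(\<Sum>w\<in>gap_vectors k k. measure M {\<omega> \<in> space M. first_arrivals_in_slots N k \<gamma> h w \<omega>})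
      = P.prob (\<Union>w\<in>gap_vectors k k. F w)"
    using F finite_gap_vectors disjoint by (simp add: P.finite_measure_finite_Union image_subset_iff)
  also have "\<dots> \<le> P.prob {\<omega> \<in> space P. (\<Sum>i = 1..k. T i \<omega>) < t}"
  proof (rule P.finite_measure_mono)
    have "(\<Sum>i = 1..k. T i \<omega>) < real k * h" if "w \<in> gap_vectors k k" "\<omega> \<in> F w" for w \<omega>
      using that \<open>0 < h\<close> c
      by (intro sum_slot_bounds_less[of w k h c]) (auto simp: F_def less_imp_le)
    then show "(\<Union>w\<in>gap_vectors k k. F w) \<subseteq> {\<omega> \<in> space P. (\<Sum>i = 1..k. T i \<omega>) < t}"
      using \<open>1 \<le> k\<close> by (auto simp: h_def F_def)
    have "T i \<in> borel_measurable P" if "i \<in> {1..k}" for i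
      using indep that by (simp add: P.indep_vars_def)
    then show "{\<omega> \<in> space P. (\<Sum>i = 1..k. T i \<omega>) < t} \<in> P.events"
      by measurable
  qed
  finally show ?thesis
    by (simp add: h_def)
qed

theorem mainTheorem5:
  fixes M :: "'a measure" and N :: "site \<times> site \<Rightarrow> 'a \<Rightarrow> real set"
    and P :: "'b measure" and T :: "nat \<Rightarrow> 'b \<Rightarrow> real"
    and k :: nat and t :: real
  assumes "prob_space M"
    and "indep_poisson_family M N"
    and "prob_space P"
    and "prob_space.indep_vars P (\<lambda>_. borel) T {1..k}"
    and "\<forall>i \<in> {1..k}. distributed P lborel (T i)
            (exponential_density (4 * sqrt (real i + 1)))"
    and "k \<ge> 1" and "t > 0"
  shows "measure M {\<omega> \<in> space M. \<exists>y \<in> interface N t \<omega>. enorm y > real k}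
           \<le> 4 ^ k * measure P {\<omega> \<in> space P. (\<Sum>i = 1..k. T i \<omega>) < t}"
proof -
  interpret M: prob_space M by (fact assms(1))
  define E where "E \<gamma> w = {\<omega> \<in> space M. first_arrivals_in_slots N k \<gamma> (t / k) w \<omega>}" for \<gamma> w
  have E: "E \<gamma> w \<in> M.events" if "\<gamma> \<in> admissible_walks k" for \<gamma> w
    unfolding E_def using that assms(6,7)
    by (intro measure_first_arrivals_in_slots(1)[OF assms(1,2)]) (auto simp: admissible_walks_def)
  have "measure M {\<omega> \<in> space M. \<exists>y \<in> interface N t \<omega>. enorm y > real k}
      \<le> measure M (\<Union>\<gamma>\<in>admissible_walks k. \<Union>w\<in>gap_vectors k k. E \<gamma> w)"
  proof (rule M.finite_measure_mono)
    show "(\<Union>\<gamma>\<in>admissible_walks k. \<Union>w\<in>gap_vectors k k. E \<gamma> w) \<in> M.events"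
      using E by (intro sets.finite_UN finite_admissible_walks finite_gap_vectors) auto
  qed (unfold E_def, rule interface_escape_subset[OF assms(7,6)])
  also have "\<dots> \<le> (\<Sum>\<gamma>\<in>admissible_walks k. \<Sum>w\<in>gap_vectors k k. measure M (E \<gamma> w))"
    using E finite_admissible_walks finite_gap_vectors
    by (intro order_trans[OF measure_UNION_le] sum_mono measure_UNION_le) auto
  also have "\<dots> \<le> (\<Sum>\<gamma>\<in>admissible_walks k. measure P {\<omega> \<in> space P. (\<Sum>i = 1..k. T i \<omega>) < t})"
    unfolding E_def using assms by (intro sum_mono sum_measure_first_arrivals_le) auto
  also have "\<dots> \<le> 4 ^ k * measure P {\<omega> \<in> space P. (\<Sum>i = 1..k. T i \<omega>) < t}"
    using card_admissible_walks_le[of k] by (simp add: mult_right_mono)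
  finally show ?thesis .
qed

end
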